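(* Let $k$ be an algebraically closed field of characteristic $0$. Every curve in a nonempty Zariski open subset of the moduli space of genus-$2$ curves over $k$ is isomorphic to a curve of the form $y^2=(x-v)(vx-1)(x^2-a_1)(x^2-a_2)$ with $a_1,a_2,v\in k$. Equivalently, for six points $P_1,\ldots,P_6$ of $\mathbf{P}^1(k)$ in general position, there is a coordinate $x$ on $\mathbf{P}^1$ in which the set $\{P_1,\ldots,P_6\}$ equals $\{x_1,-x_1,x_2,-x_2,v,1/v\}$ for some $x_1,x_2,v\in k$. *)

theory Defs
  imports "HOL-Computational_Algebra.Polynomial"
begin

text \<open>Polynomials in the six variables t_0,...,t_5 over k, represented by their
 coefficient function on exponent vectors (e :: nat => nat, with e i = 0 for i >= 6),
 with finite support.\<close>

definition is_poly6 :: "((nat \<Rightarrow> nat) \<Rightarrow> 'k::field) \<Rightarrow> bool" where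
  "is_poly6 c \<longleftrightarrow> finite {e. c e \<noteq> 0} \<and> (\<forall>e. c e \<noteq> 0 \<longrightarrow> (\<forall>i\<ge>6. e i = 0))"

definition eval_poly6 :: "((nat \<Rightarrow> nat) \<Rightarrow> 'k::field) \<Rightarrow> (nat \<Rightarrow> 'k) \<Rightarrow> 'k" where
  "eval_poly6 c P = (\<Sum>e\<in>{e. c e \<noteq> 0}. c e * (\<Prod>i<6. P i ^ e i))"

definition moebius :: "'k::field \<Rightarrow> 'k \<Rightarrow> 'k \<Rightarrow> 'k \<Rightarrow> 'k \<Rightarrow> 'k" where
  "moebius a b c d x = (a * x + b) / (c * x + d)"

end

theory Submission
  imports Defs
begin

(*
  Geometric idea: there is a unique involution of the projective line swapping
  P 0 <-> P 1 and P 2 <-> P 3.  Its fixed points alpha, beta are the roots of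
  t^2 - s t + p, where (s, p) solves two linear equations (one per swapped pair);
  these are solvable when D = P 0 + P 1 - P 2 - P 3 /= 0, with s = S/D and
  p = N/(2D) for explicit polynomials S and N.  In the coordinate
  x |-> (x - alpha)/(x - beta) the involution becomes x |-> -x, so the two pairs
  become {u0, -u0} and {u2, -u2}; rescaling by gamma with
  gamma^2 u4 u5 = 1 turns the last two images into {v, 1/v}.
*)

section \<open>Polynomial functions of six variables\<close>

lemma eval_poly6_superset:
  assumes "finite S" "{e. c e \<noteq> 0} \<subseteq> S"
  shows "eval_poly6 c P = (\<Sum>e\<in>S. c e * (\<Prod>i<6. P i ^ e i))"
  unfolding eval_poly6_def
  by (rule sum.mono_neutral_left) (use assms in auto)

lemma is_poly6_finite_support: "is_poly6 c \<Longrightarrow> finite {e. c e \<noteq> 0}"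
  by (simp add: is_poly6_def)

definition poly6_function :: "((nat \<Rightarrow> 'k::field) \<Rightarrow> 'k) \<Rightarrow> bool" where
  "poly6_function g \<longleftrightarrow> (\<exists>c. is_poly6 c \<and> (\<forall>P. eval_poly6 c P = g P))"

lemma poly6_function_const: "poly6_function (\<lambda>P. k)"
proof -
  define c where "c e = (if e = (\<lambda>_. 0) then k else 0)" for e :: "nat \<Rightarrow> nat"
  have "is_poly6 c" by (auto simp: is_poly6_def c_def)
  moreover have "eval_poly6 c P = k" for P
    by (subst eval_poly6_superset[of "{\<lambda>_. 0}"]) (auto simp: c_def)
  ultimately show ?thesis unfolding poly6_function_def by blast
qed

lemma poly6_function_var:
  assumes "i < 6"
  shows "poly6_function (\<lambda>P :: nat \<Rightarrow> 'k::field. P i)"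
proof -
  define ei where "ei = (\<lambda>j. if j = i then 1 else 0 :: nat)"
  define c where "c e = (if e = ei then 1 else 0 :: 'k)" for e
  have "is_poly6 c" using assms by (auto simp: is_poly6_def c_def ei_def)
  moreover have "eval_poly6 c P = P i" for P
  proof -
    have "eval_poly6 c P = (\<Prod>j<6. P j ^ ei j)"
      by (subst eval_poly6_superset[of "{ei}"]) (auto simp: c_def)
    also have "\<dots> = (\<Prod>j<6. if j = i then P j else 1)"
      by (intro prod.cong) (auto simp: ei_def)
    also have "\<dots> = P i" using assms by (simp add: prod.delta)
    finally show ?thesis .
  qed
  ultimately show ?thesis unfolding poly6_function_def by blast
qed

lemma poly6_function_add:
  assumes "poly6_function f" "poly6_function g"
  shows "poly6_function (\<lambda>P. f P + g P)"
proof -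
  obtain a b where a: "is_poly6 a" "\<And>P. eval_poly6 a P = f P"
    and b: "is_poly6 b" "\<And>P. eval_poly6 b P = g P"
    using assms unfolding poly6_function_def by blast
  define S where "S = {e. a e \<noteq> 0} \<union> {e. b e \<noteq> 0}"
  have S: "finite S" using a b by (simp add: S_def is_poly6_finite_support)
  have supp: "{e. a e + b e \<noteq> 0} \<subseteq> S" by (auto simp: S_def)
  have "is_poly6 (\<lambda>e. a e + b e)"
    unfolding is_poly6_def
  proof (intro conjI allI impI)
    show "finite {e. a e + b e \<noteq> 0}" using S supp by (rule finite_subset[rotated])
    fix e and i :: nat assume "a e + b e \<noteq> 0" "6 \<le> i"
    then have "a e \<noteq> 0 \<or> b e \<noteq> 0" by auto
    then show "e i = 0" using a(1) b(1) \<open>6 \<le> i\<close> unfolding is_poly6_def by blast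
  qed
  moreover have "eval_poly6 (\<lambda>e. a e + b e) P = f P + g P" for P
    using eval_poly6_superset[OF S supp] eval_poly6_superset[OF S, of a]
      eval_poly6_superset[OF S, of b] a(2) b(2)
    by (simp add: S_def distrib_right sum.distrib)
  ultimately show ?thesis unfolding poly6_function_def by blast
qed

lemma poly6_function_neg:
  assumes "poly6_function f"
  shows "poly6_function (\<lambda>P. - f P)"
proof -
  obtain a where a: "is_poly6 a" "\<And>P. eval_poly6 a P = f P"
    using assms unfolding poly6_function_def by blast
  have "is_poly6 (\<lambda>e. - a e)" using a(1) by (simp add: is_poly6_def)
  moreover have "eval_poly6 (\<lambda>e. - a e) P = - f P" for P
    using a(2)[of P] by (simp add: eval_poly6_def sum_negf)
  ultimately show ?thesis unfolding poly6_function_def by blast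
qed

lemma poly6_function_diff:
  assumes "poly6_function f" "poly6_function g"
  shows "poly6_function (\<lambda>P. f P - g P)"
  using poly6_function_add[OF assms(1) poly6_function_neg[OF assms(2)]] by simp

lemma poly6_function_mult:
  assumes "poly6_function f" "poly6_function g"
  shows "poly6_function (\<lambda>P. f P * g P)"
proof -
  obtain a b where a: "is_poly6 a" "\<And>P. eval_poly6 a P = f P"
    and b: "is_poly6 b" "\<And>P. eval_poly6 b P = g P"
    using assms unfolding poly6_function_def by blast
  define A where "A = {e. a e \<noteq> 0}"
  define B where "B = {e. b e \<noteq> 0}"
  define add :: "(nat \<Rightarrow> nat) \<times> (nat \<Rightarrow> nat) \<Rightarrow> nat \<Rightarrow> nat"
    where "add x = (\<lambda>i. fst x i + snd x i)" for x
  define c where "c e = (\<Sum>x\<in>{x \<in> A \<times> B. add x = e}. a (fst x) * b (snd x))" for e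
  have AB: "finite A" "finite B" using a(1) b(1) by (simp_all add: A_def B_def is_poly6_finite_support)
  have T: "finite (add ` (A \<times> B))" using AB by simp
  have supp: "{e. c e \<noteq> 0} \<subseteq> add ` (A \<times> B)"
  proof
    fix e assume "e \<in> {e. c e \<noteq> 0}"
    then have "c e \<noteq> 0" by simp
    then have "{x \<in> A \<times> B. add x = e} \<noteq> {}" unfolding c_def by (rule contrapos_nn) (simp only: sum.empty)
    then show "e \<in> add ` (A \<times> B)" by blast
  qed
  have "is_poly6 c"
    unfolding is_poly6_def
  proof (intro conjI allI impI)
    show "finite {e. c e \<noteq> 0}" using T supp by (rule finite_subset[rotated])
    fix e and i :: nat assume "c e \<noteq> 0" "6 \<le> i"
    then obtain x y where "x \<in> A" "y \<in> B" "e = add (x, y)" using supp by auto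
    then show "e i = 0" using a(1) b(1) \<open>6 \<le> i\<close> by (auto simp: is_poly6_def A_def B_def add_def)
  qed
  moreover have "eval_poly6 c P = f P * g P" for P
  proof -
    let ?m = "\<lambda>e. \<Prod>i<6. P i ^ e i"
    have m_add: "?m (add x) = ?m (fst x) * ?m (snd x)" for x
      by (simp add: add_def power_add prod.distrib)
    have "eval_poly6 c P = (\<Sum>e\<in>add ` (A \<times> B). c e * ?m e)"
      by (rule eval_poly6_superset[OF T supp])
    also have "\<dots> = (\<Sum>e\<in>add ` (A \<times> B). \<Sum>x\<in>{x \<in> A \<times> B. add x = e}.
                        a (fst x) * b (snd x) * ?m (add x))"
      by (simp add: c_def sum_distrib_right)
    also have "\<dots> = (\<Sum>x\<in>A \<times> B. a (fst x) * b (snd x) * ?m (add x))"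
      by (rule sum.group) (use AB in auto)
    also have "\<dots> = (\<Sum>x\<in>A. \<Sum>y\<in>B. (a x * ?m x) * (b y * ?m y))"
      by (simp add: sum.cartesian_product m_add mult_ac split_def)
    also have "\<dots> = (\<Sum>x\<in>A. a x * ?m x) * (\<Sum>y\<in>B. b y * ?m y)"
      by (simp add: sum_product)
    also have "\<dots> = f P * g P"
      using eval_poly6_superset[OF AB(1), of a] eval_poly6_superset[OF AB(2), of b] a(2) b(2)
      by (simp add: A_def B_def)
    finally show ?thesis .
  qed
  ultimately show ?thesis unfolding poly6_function_def by blast
qed

lemma poly6_function_prod:
  assumes "finite I" "\<And>i. i \<in> I \<Longrightarrow> poly6_function (f i)"
  shows "poly6_function (\<lambda>P. \<Prod>i\<in>I. f i P)"
  using assms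
  by (induction I rule: finite_induct)
     (simp_all add: poly6_function_const poly6_function_mult)

lemmas poly6_function_intros =
  poly6_function_const poly6_function_var poly6_function_add
  poly6_function_diff poly6_function_mult

lemma poly6_function_nonzero_coeff:
  assumes "poly6_function g" "g P0 \<noteq> 0"
  shows "\<exists>c. is_poly6 c \<and> (\<exists>e. c e \<noteq> 0) \<and> (\<forall>P. eval_poly6 c P = g P)"
proof -
  obtain c where c: "is_poly6 c" "\<And>P. eval_poly6 c P = g P"
    using assms(1) unfolding poly6_function_def by blast
  have "\<exists>e. c e \<noteq> 0"
  proof (rule ccontr)
    assume "\<not> (\<exists>e. c e \<noteq> 0)"
    then have "eval_poly6 c P0 = 0" by (simp add: eval_poly6_def)
    with c(2) assms(2) show False by simp
  qed
  with c show ?thesis by blast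
qed

section \<open>The involution through two pairs of points\<close>

lemma distinct_roots_of_quadratic:
  fixes s p :: "'k::{alg_closed_field, field_char_0}"
  assumes "s\<^sup>2 - 4 * p \<noteq> 0"
  obtains \<alpha> \<beta> where "\<alpha> + \<beta> = s" "\<alpha> * \<beta> = p" "\<alpha> \<noteq> \<beta>"
proof -
  obtain r where r: "r\<^sup>2 = s\<^sup>2 - 4 * p" using nth_root_exists[of 2 "s\<^sup>2 - 4 * p"] by auto
  have "(s + r) / 2 + (s - r) / 2 = s" by (simp add: add_divide_distrib[symmetric])
  moreover have "(s + r) / 2 * ((s - r) / 2) = p"
    using r by (simp add: field_simps power2_eq_square)
  moreover have "(s + r) / 2 \<noteq> (s - r) / 2"
    using r assms by auto
  ultimately show ?thesis by (rule that)
qed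

text \<open>The points x, y are exchanged by the involution with fixed points
  \<alpha>, \<beta> iff 2xy - (\<alpha>+\<beta>)(x+y) + 2\<alpha>\<beta> = 0; in the coordinate
  (x - \<alpha>)/(x - \<beta>) this involution is x \<mapsto> -x.\<close>

lemma swapped_pair_opposite:
  fixes \<alpha> \<beta> x y :: "'k::field"
  assumes "x \<noteq> \<beta>" "y \<noteq> \<beta>" "2 * x * y - (\<alpha> + \<beta>) * (x + y) + 2 * (\<alpha> * \<beta>) = 0"
  shows "(x - \<alpha>) / (x - \<beta>) = - ((y - \<alpha>) / (y - \<beta>))"
proof -
  have "(x - \<alpha>) * (y - \<beta>) + (y - \<alpha>) * (x - \<beta>) =
        2 * x * y - (\<alpha> + \<beta>) * (x + y) + 2 * (\<alpha> * \<beta>)"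
    by (simp add: algebra_simps)
  with assms show ?thesis by (simp add: field_simps)
qed

lemma normal_form_by_moebius:
  fixes P :: "nat \<Rightarrow> 'k::field" and \<alpha> \<beta> \<gamma> :: 'k
  defines "u \<equiv> \<lambda>i. (P i - \<alpha>) / (P i - \<beta>)"
  assumes "\<alpha> \<noteq> \<beta>" "\<And>i. i < 6 \<Longrightarrow> P i \<noteq> \<beta>"
    and "u 1 = - u 0" "u 3 = - u 2" "\<gamma>^2 * (u 4 * u 5) = 1"
  shows "\<exists>a b c d x1 x2 v. a * d - b * c \<noteq> 0 \<and> v \<noteq> 0 \<and>
           (\<forall>i<6. c * P i + d \<noteq> 0) \<and>
           moebius a b c d ` (P ` {..<6}) = {x1, -x1, x2, -x2, v, 1 / v}"
proof (intro exI conjI)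
  have \<gamma>: "\<gamma> \<noteq> 0" and u4: "u 4 \<noteq> 0" using assms(6) by auto
  have u5: "\<gamma> * u 5 = 1 / (\<gamma> * u 4)"
    using assms(6) \<gamma> u4 by (simp add: field_simps power2_eq_square)
  have map: "moebius \<gamma> (- \<gamma> * \<alpha>) 1 (- \<beta>) (P i) = \<gamma> * u i" for i
    by (simp add: moebius_def u_def algebra_simps)
  have "{..<6::nat} = {0, 1, 2, 3, 4, 5}" by auto
  then have "moebius \<gamma> (- \<gamma> * \<alpha>) 1 (- \<beta>) ` P ` {..<6} = (\<lambda>i. \<gamma> * u i) ` {0, 1, 2, 3, 4, 5}"
    by (simp only: image_image map)
  also have "\<dots> = {\<gamma> * u 0, - (\<gamma> * u 0), \<gamma> * u 2, - (\<gamma> * u 2), \<gamma> * u 4, 1 / (\<gamma> * u 4)}"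
    using assms(4,5) u5 by simp
  finally show "moebius \<gamma> (- \<gamma> * \<alpha>) 1 (- \<beta>) ` P ` {..<6} =
    {\<gamma> * u 0, - (\<gamma> * u 0), \<gamma> * u 2, - (\<gamma> * u 2), \<gamma> * u 4, 1 / (\<gamma> * u 4)}" .
  show "\<gamma> * - \<beta> - - \<gamma> * \<alpha> * 1 \<noteq> 0" using \<gamma> assms(2) by (simp add: algebra_simps)
  show "\<gamma> * u 4 \<noteq> 0" using \<gamma> u4 by simp
  show "\<forall>i<6. 1 * P i + - \<beta> \<noteq> 0" using assms(3) by simp
qed

section \<open>The genericity polynomial\<close>

text \<open>With D = P0 + P1 - P2 - P3 (pair_gap), S = fixed_sum_num and
  N = fixed_prod_num, the fixed points of the involution swapping
  P0 \<leftrightarrow> P1 and P2 \<leftrightarrow> P3 have sum S/D and product N/(2D); the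
  discriminant of the involution, scaled by D^2, is S^2 - 2ND; and
  2D P^2 - 2S P + N vanishes exactly when P is one of the fixed points.\<close>

definition pair_gap :: "(nat \<Rightarrow> 'k::field) \<Rightarrow> 'k" where
  "pair_gap P = P 0 + P 1 - (P 2 + P 3)"

definition fixed_sum_num :: "(nat \<Rightarrow> 'k::field) \<Rightarrow> 'k" where
  "fixed_sum_num P = 2 * (P 0 * P 1 - P 2 * P 3)"

definition fixed_prod_num :: "(nat \<Rightarrow> 'k::field) \<Rightarrow> 'k" where
  "fixed_prod_num P = fixed_sum_num P * (P 0 + P 1) - 2 * (P 0 * P 1 * pair_gap P)"

definition involution_disc :: "(nat \<Rightarrow> 'k::field) \<Rightarrow> 'k" where
  "involution_disc P = fixed_sum_num P ^ 2 - 2 * (fixed_prod_num P * pair_gap P)"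

definition fixed_point_test :: "(nat \<Rightarrow> 'k::field) \<Rightarrow> nat \<Rightarrow> 'k" where
  "fixed_point_test P i =
     2 * (pair_gap P * P i ^ 2) - 2 * (fixed_sum_num P * P i) + fixed_prod_num P"

definition genericity :: "(nat \<Rightarrow> 'k::field) \<Rightarrow> 'k" where
  "genericity P = pair_gap P * involution_disc P * (\<Prod>i<6. fixed_point_test P i)"

lemma poly6_function_genericity: "poly6_function genericity"
proof -
  have test: "poly6_function (\<lambda>P. fixed_point_test P i)" if "i < 6" for i
    unfolding fixed_point_test_def fixed_prod_num_def fixed_sum_num_def pair_gap_def power2_eq_square
    using that by (intro poly6_function_intros) simp_all
  show ?thesis
    unfolding genericity_def involution_disc_def
    unfolding fixed_prod_num_def fixed_sum_num_def pair_gap_def power2_eq_square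
    by (intro poly6_function_intros poly6_function_prod) (simp_all add: test)
qed

lemma fixed_points_of_involution:
  fixes P :: "nat \<Rightarrow> 'k::field_char_0"
  assumes D: "pair_gap P \<noteq> 0"
    and sum: "\<alpha> + \<beta> = fixed_sum_num P / pair_gap P"
    and prod: "\<alpha> * \<beta> = fixed_prod_num P / (2 * pair_gap P)"
  shows "2 * P 0 * P 1 - (\<alpha> + \<beta>) * (P 0 + P 1) + 2 * (\<alpha> * \<beta>) = 0"
    and "2 * P 2 * P 3 - (\<alpha> + \<beta>) * (P 2 + P 3) + 2 * (\<alpha> * \<beta>) = 0"
    and "fixed_point_test P i = 2 * pair_gap P * ((P i - \<alpha>) * (P i - \<beta>))"
proof -
  have pair: "2 * x * y - (\<alpha> + \<beta>) * (x + y) + 2 * (\<alpha> * \<beta>) =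
      (2 * x * y * pair_gap P - fixed_sum_num P * (x + y) + fixed_prod_num P) / pair_gap P" for x y
    using D unfolding sum prod by (simp add: field_simps)
  show "2 * P 0 * P 1 - (\<alpha> + \<beta>) * (P 0 + P 1) + 2 * (\<alpha> * \<beta>) = 0"
    unfolding pair fixed_prod_num_def by simp
  show "2 * P 2 * P 3 - (\<alpha> + \<beta>) * (P 2 + P 3) + 2 * (\<alpha> * \<beta>) = 0"
    unfolding pair fixed_prod_num_def fixed_sum_num_def pair_gap_def by (simp add: algebra_simps)
  have "(P i - \<alpha>) * (P i - \<beta>) = P i ^ 2 - (\<alpha> + \<beta>) * P i + \<alpha> * \<beta>"
    by (simp add: algebra_simps power2_eq_square)
  then show "fixed_point_test P i = 2 * pair_gap P * ((P i - \<alpha>) * (P i - \<beta>))"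
    using D unfolding sum prod fixed_point_test_def by (simp add: field_simps)
qed

text \<open>The discriminant of t^2 - (S/D) t + N/(2D), scaled by D^2, is the
  polynomial involution_disc; its nonvanishing makes the fixed points distinct.\<close>

lemma involution_disc_eq:
  fixes P :: "nat \<Rightarrow> 'k::field_char_0"
  assumes "pair_gap P \<noteq> 0"
  shows "involution_disc P = pair_gap P ^ 2 *
     ((fixed_sum_num P / pair_gap P)^2 - 4 * (fixed_prod_num P / (2 * pair_gap P)))"
  using assms unfolding involution_disc_def by (simp add: field_simps power2_eq_square)

lemma normal_form_if_generic:
  fixes P :: "nat \<Rightarrow> 'k::{alg_closed_field, field_char_0}"
  assumes "genericity P \<noteq> 0"
  shows "\<exists>a b c d x1 x2 v. a * d - b * c \<noteq> 0 \<and> v \<noteq> 0 \<and>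
           (\<forall>i<6. c * P i + d \<noteq> 0) \<and>
           moebius a b c d ` (P ` {..<6}) = {x1, -x1, x2, -x2, v, 1 / v}"
proof -
  have D: "pair_gap P \<noteq> 0" and disc: "involution_disc P \<noteq> 0"
    and test: "\<And>i. i < 6 \<Longrightarrow> fixed_point_test P i \<noteq> 0"
    using assms by (simp_all add: genericity_def)
  have "(fixed_sum_num P / pair_gap P)\<^sup>2 - 4 * (fixed_prod_num P / (2 * pair_gap P)) \<noteq> 0"
    using disc involution_disc_eq[OF D] by auto
  then obtain \<alpha> \<beta> where sum: "\<alpha> + \<beta> = fixed_sum_num P / pair_gap P"
    and prod: "\<alpha> * \<beta> = fixed_prod_num P / (2 * pair_gap P)" and "\<alpha> \<noteq> \<beta>"
    by (rule distinct_roots_of_quadratic)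
  note fp = fixed_points_of_involution[OF D sum prod]
  have not_fixed: "P i \<noteq> \<alpha>" "P i \<noteq> \<beta>" if "i < 6" for i
    using test[OF that] fp(3)[of i] by auto
  define u where "u i = (P i - \<alpha>) / (P i - \<beta>)" for i
  have "u 1 = - u 0"
    unfolding u_def using not_fixed[of 0] not_fixed[of 1] fp(1)
    by (intro swapped_pair_opposite) (simp_all add: algebra_simps)
  moreover have "u 3 = - u 2"
    unfolding u_def using not_fixed[of 2] not_fixed[of 3] fp(2)
    by (intro swapped_pair_opposite) (simp_all add: algebra_simps)
  moreover obtain \<gamma> where "\<gamma>\<^sup>2 = 1 / (u 4 * u 5)"
    using nth_root_exists[of 2 "1 / (u 4 * u 5)"] by auto
  then have "\<gamma>\<^sup>2 * (u 4 * u 5) = 1"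
    using not_fixed[of 4] not_fixed[of 5] by (simp add: u_def)
  ultimately show ?thesis
    using normal_form_by_moebius[of \<alpha> \<beta> P \<gamma>] \<open>\<alpha> \<noteq> \<beta>\<close> not_fixed(2)
    unfolding u_def by blast
qed

lemma genericity_witness:
  "genericity (\<lambda>i. if i = 0 then -3 else if i = 1 then -2 else if i = 2 then -1
                    else if i = 3 then 0 else -3 :: 'k::field_char_0) \<noteq> 0"
  by (simp add: genericity_def involution_disc_def fixed_point_test_def fixed_prod_num_def
      fixed_sum_num_def pair_gap_def eval_nat_numeral)

theorem mainTheorem6:
  shows "\<exists>f :: (nat \<Rightarrow> nat) \<Rightarrow> 'k::{alg_closed_field, field_char_0}.
           is_poly6 f \<and> (\<exists>e. f e \<noteq> 0) \<and>
           (\<forall>P :: nat \<Rightarrow> 'k. eval_poly6 f P \<noteq> 0 \<longrightarrow>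
              (\<exists>a b c d x1 x2 v. a * d - b * c \<noteq> 0 \<and> v \<noteq> 0 \<and>
                 (\<forall>i<6. c * P i + d \<noteq> 0) \<and>
                 moebius a b c d ` (P ` {..<6}) = {x1, -x1, x2, -x2, v, 1 / v}))"
proof -
  obtain f :: "(nat \<Rightarrow> nat) \<Rightarrow> 'k" where f: "is_poly6 f" "\<exists>e. f e \<noteq> 0"
    and eval: "\<And>P. eval_poly6 f P = genericity P"
    using poly6_function_nonzero_coeff[OF poly6_function_genericity genericity_witness] by blast
  show ?thesis
    by (intro exI[of _ f] conjI f allI impI normal_form_if_generic) (simp add: eval)
qed

end
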